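(* For all integers $m\geq 2$: (i) if $-\frac12<\lambda\leq 0$, then $$\widetilde A_{2,m}\geq\frac{(m-1)m(m+\lambda)(m+\lambda+1)\big(m^2+\lambda m-\frac12\big)\big(m^2+\lambda m-\frac{\lambda}{3}-\frac72\big)}{2(2\lambda+1)(2\lambda+5)};$$ (ii) if $\lambda\geq 0$, then $$\widetilde A_{2,m}\geq\frac{(m-1)m(m+\lambda)(m+\lambda+1)\big(m^2+\lambda m-\frac12\big)\big(m^2+\lambda m-\frac{\lambda}{2}-\frac72\big)}{2(2\lambda+1)(2\lambda+5)};$$ and for every $\lambda>-\frac12$, $$\widetilde A_{2,m}\leq\frac{(m-1)m^2(m+\lambda)^2(m+\lambda+1)\big(m^2+\lambda m-\frac12\big)}{2(2\lambda+1)(2\lambda+5)}.$$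
   Context: Fix $\lambda>-1/2$. Define $\widetilde Q_m$ by $\widetilde Q_0=1$, $\widetilde Q_1(\mu)=1-\frac{\lambda+1}{2}\mu$ and, for $m\geq2$, $$\widetilde Q_m-\widetilde Q_{m-1}=\frac{(m-1)(2m-1)(2m-1+\lambda)}{(m-1+\lambda)(2m-3+\lambda)(2m-3+2\lambda)}\big[\widetilde Q_{m-1}-\widetilde Q_{m-2}\big]-\frac{(2m-1)(2m-2+\lambda)(2m-1+\lambda)}{2(m-1+\lambda)}\,\mu\,\widetilde Q_{m-1}(\mu).$$ Write $\widetilde Q_m(\mu)=\sum_{i=0}^m(-1)^i\widetilde A_{i,m}\mu^i$; thus $\widetilde A_{2,m}$ is the coefficient of $\mu^2$ in $\widetilde Q_m$. *)

theory Defs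
  imports "HOL-Computational_Algebra.Polynomial"
begin

fun Qt :: "real \<Rightarrow> nat \<Rightarrow> real poly" where
  "Qt lam 0 = 1"
| "Qt lam (Suc 0) = [:1, - (lam + 1) / 2:]"
| "Qt lam (Suc (Suc n)) =
     (let m = real n + 2;
          c1 = (m - 1) * (2*m - 1) * (2*m - 1 + lam)
               / ((m - 1 + lam) * (2*m - 3 + lam) * (2*m - 3 + 2*lam));
          c2 = (2*m - 1) * (2*m - 2 + lam) * (2*m - 1 + lam) / (2 * (m - 1 + lam))
      in Qt lam (Suc n) + smult c1 (Qt lam (Suc n) - Qt lam n)
         - smult c2 (pCons 0 (Qt lam (Suc n))))"

text \<open>Q_m(mu) = sum_i (-1)^i A_{i,m} mu^i, so A_{i,m} = (-1)^i * coeff.\<close>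
definition At :: "real \<Rightarrow> nat \<Rightarrow> nat \<Rightarrow> real" where
  "At lam i m = (-1) ^ i * coeff (Qt lam m) i"

end

theory Submission imports Defs begin

text \<open>The low coefficients of Q-tilde_m depend on m only through s = m(m + lam):
  the coefficient of mu is -s(s - 1/2)/(2 lam + 1) and that of mu^2 is s P(s) divided by
  24(2 lam + 1)(2 lam + 3)(2 lam + 5), with an explicit cubic P; both closed forms are checked
  against the recurrence by clearing denominators. The three bounds, after cancelling s and the
  positive constants, become cubic inequalities in s for s \<ge> 4 + 2 lam (the value at m = 2).
  Writing s = 4 + 2 lam + u and lam = t - 1/2, each difference is a polynomial in u, t \<ge> 0
  (or u, lam \<ge> 0) with nonnegative coefficients, up to two terms that are visibly
  nonnegative for t \<le> 1/2.\<close>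

definition Qt_rec_c1 :: "real \<Rightarrow> real \<Rightarrow> real" where
  "Qt_rec_c1 lam m = (m - 1) * (2*m - 1) * (2*m - 1 + lam)
                 / ((m - 1 + lam) * (2*m - 3 + lam) * (2*m - 3 + 2*lam))"

definition Qt_rec_c2 :: "real \<Rightarrow> real \<Rightarrow> real" where
  "Qt_rec_c2 lam m = (2*m - 1) * (2*m - 2 + lam) * (2*m - 1 + lam) / (2 * (m - 1 + lam))"

lemma Qt_Suc_Suc:
  "Qt lam (Suc (Suc n)) = Qt lam (Suc n)
     + smult (Qt_rec_c1 lam (real n + 2)) (Qt lam (Suc n) - Qt lam n)
     - smult (Qt_rec_c2 lam (real n + 2)) (pCons 0 (Qt lam (Suc n)))"
  by (simp add: Qt_rec_c1_def Qt_rec_c2_def Let_def)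

lemma coeff_three_term_recurrence:
  "coeff (p + smult a (p - q) - smult b (pCons 0 p)) (Suc i)
     = coeff p (Suc i) + a * (coeff p (Suc i) - coeff q (Suc i)) - b * coeff p i"
  by simp

definition Qt_coeff1 :: "real \<Rightarrow> real \<Rightarrow> real" where
  "Qt_coeff1 lam s = - s * (s - 1/2) / (2*lam + 1)"

definition Qt_cubic :: "real \<Rightarrow> real \<Rightarrow> real" where
  "Qt_cubic lam s = 12*(2*lam + 3)*s^3 - 4*(8*lam^2 + 34*lam + 41)*s^2
     + (64*lam^2 + 218*lam + 199)*s + (8*lam^4 + 28*lam^3 + 6*lam^2 - 85*lam - 71)"

definition Qt_coeff2 :: "real \<Rightarrow> real \<Rightarrow> real" where
  "Qt_coeff2 lam s = s * Qt_cubic lam s / (24 * (2*lam + 1) * (2*lam + 3) * (2*lam + 5))"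

lemma Qt_coeff1_recurrence:
  fixes lam m :: real
  assumes "lam > -1/2" "m \<ge> 2"
  shows "Qt_coeff1 lam (m*(m + lam)) = Qt_coeff1 lam ((m-1)*(m-1 + lam))
     + Qt_rec_c1 lam m * (Qt_coeff1 lam ((m-1)*(m-1 + lam)) - Qt_coeff1 lam ((m-2)*(m-2 + lam)))
     - Qt_rec_c2 lam m"
proof -
  have "m - 1 + lam \<noteq> 0" "2*m - 3 + lam \<noteq> 0" "2*m - 3 + 2*lam \<noteq> 0"
    "2*lam + 1 \<noteq> 0"
    using assms by auto
  then show ?thesis
    unfolding Qt_coeff1_def Qt_rec_c1_def Qt_rec_c2_def by (simp add: divide_simps) algebra
qed

lemma Qt_coeff2_recurrence:
  fixes lam m :: real
  assumes "lam > -1/2" "m \<ge> 2"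
  shows "Qt_coeff2 lam (m*(m + lam)) = Qt_coeff2 lam ((m-1)*(m-1 + lam))
     + Qt_rec_c1 lam m * (Qt_coeff2 lam ((m-1)*(m-1 + lam)) - Qt_coeff2 lam ((m-2)*(m-2 + lam)))
     - Qt_rec_c2 lam m * Qt_coeff1 lam ((m-1)*(m-1 + lam))"
proof -
  have "m - 1 + lam \<noteq> 0" "2*m - 3 + lam \<noteq> 0" "2*m - 3 + 2*lam \<noteq> 0"
    "2*lam + 1 \<noteq> 0" "2*lam + 3 \<noteq> 0" "2*lam + 5 \<noteq> 0"
    using assms by auto
  then show ?thesis
    unfolding Qt_coeff2_def Qt_cubic_def Qt_coeff1_def Qt_rec_c1_def Qt_rec_c2_def
    by (simp add: divide_simps) algebra
qed

lemma coeff_Qt: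
  assumes "lam > -1/2"
  shows "coeff (Qt lam n) 0 = 1
    \<and> coeff (Qt lam n) 1 = Qt_coeff1 lam (real n * (real n + lam))
    \<and> coeff (Qt lam n) 2 = Qt_coeff2 lam (real n * (real n + lam))"
proof (induction n rule: nat_less_induct)
  case (1 n)
  consider "n = 0" | "n = 1" | k where "n = Suc (Suc k)"
    by (metis One_nat_def not0_implies_Suc)
  then show ?case
  proof cases
    case 1
    then show ?thesis by (simp add: Qt_coeff1_def Qt_coeff2_def)
  next
    case 2
    have "Qt_cubic lam (1 + lam) = 0"
      unfolding Qt_cubic_def by algebra
    moreover have "2*lam + 1 \<noteq> 0" using assms by auto
    ultimately show ?thesis
      by (simp add: 2 Qt_coeff1_def Qt_coeff2_def numeral_2_eq_2 field_simps)
  next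
    case 3
    define m where "m = real k + 2"
    define p where "p = Qt lam (Suc k)"
    define q where "q = Qt lam k"
    have m2: "m \<ge> 2" and n: "real n = m" by (simp_all add: m_def 3)
    have p: "coeff p 0 = 1" "coeff p 1 = Qt_coeff1 lam ((m-1)*(m-1 + lam))"
      "coeff p 2 = Qt_coeff2 lam ((m-1)*(m-1 + lam))"
      using "1.IH"[rule_format, of "Suc k"] by (simp_all add: 3 p_def m_def add.commute)
    have q: "coeff q 0 = 1" "coeff q 1 = Qt_coeff1 lam ((m-2)*(m-2 + lam))"
      "coeff q 2 = Qt_coeff2 lam ((m-2)*(m-2 + lam))"
      using "1.IH"[rule_format, of k] by (simp_all add: 3 q_def m_def)
    have Q: "Qt lam n = p + smult (Qt_rec_c1 lam m) (p - q) - smult (Qt_rec_c2 lam m) (pCons 0 p)"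
      unfolding 3 p_def q_def m_def by (rule Qt_Suc_Suc)
    have "coeff (Qt lam n) 1 = Qt_coeff1 lam (m*(m + lam))"
      using coeff_three_term_recurrence[of p "Qt_rec_c1 lam m" q "Qt_rec_c2 lam m" 0]
        Qt_coeff1_recurrence[OF assms m2]
      by (simp add: Q p q flip: One_nat_def)
    moreover have "coeff (Qt lam n) 2 = Qt_coeff2 lam (m*(m + lam))"
      using coeff_three_term_recurrence[of p "Qt_rec_c1 lam m" q "Qt_rec_c2 lam m" 1]
        Qt_coeff2_recurrence[OF assms m2]
      by (simp add: Q p q flip: One_nat_def numeral_2_eq_2)
    ultimately show ?thesis by (simp add: Q p q n)
  qed
qed

lemma Qt_coeff2_eq_scaled_cubic:
  assumes "lam > -1/2"
  shows "Qt_coeff2 lam s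
    = s * (Qt_cubic lam s / (12 * (2*lam + 3))) / (2 * (2*lam + 1) * (2*lam + 5))"
  using assms by (simp add: Qt_coeff2_def field_simps)

lemma Qt_coeff2_le_iff:
  assumes "lam > -1/2" "s > 0"
  shows "Qt_coeff2 lam s \<le> s * B / (2 * (2*lam + 1) * (2*lam + 5))
     \<longleftrightarrow> Qt_cubic lam s \<le> 12 * (2*lam + 3) * B"
proof -
  have "2 * (2*lam + 1) * (2*lam + 5) > 0" "12 * (2*lam + 3) > 0"
    using assms(1) by (auto intro!: mult_pos_pos)
  then show ?thesis
    using assms
    by (simp add: Qt_coeff2_eq_scaled_cubic divide_le_cancel pos_divide_le_eq mult.commute)
qed

lemma Qt_coeff2_ge_iff:
  assumes "lam > -1/2" "s > 0"
  shows "s * B / (2 * (2*lam + 1) * (2*lam + 5)) \<le> Qt_coeff2 lam s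
     \<longleftrightarrow> 12 * (2*lam + 3) * B \<le> Qt_cubic lam s"
proof -
  have "2 * (2*lam + 1) * (2*lam + 5) > 0" "12 * (2*lam + 3) > 0"
    using assms(1) by (auto intro!: mult_pos_pos)
  then show ?thesis
    using assms
    by (simp add: Qt_coeff2_eq_scaled_cubic divide_le_cancel pos_le_divide_eq mult.commute)
qed

lemma Qt_cubic_upper_bound:
  fixes lam s :: real
  assumes "lam > -1/2" "s \<ge> 4 + 2*lam"
  shows "Qt_cubic lam s \<le> 12 * (2*lam + 3) * (s * (s - lam - 1) * (s - 1/2))"
proof -
  define u t where "u = s - (4 + 2*lam)" and "t = lam + 1/2"
  have "12 * (2*lam + 3) * (s * (s - lam - 1) * (s - 1/2)) - Qt_cubic lam s
      = 450 + 380*u + 80*u^2 + 930*t + 520*t*u + 56*t*u^2 + 660*t^2 + 220*t^2*u + 8*t^2*u^2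
        + 204*t^3 + 32*t^3*u + 24*t^4" (is "_ = ?c")
    unfolding u_def t_def Qt_cubic_def by algebra
  moreover have "0 \<le> ?c"
    using assms
    by (intro add_nonneg_nonneg mult_nonneg_nonneg zero_le_power) (simp_all add: u_def t_def)
  ultimately show ?thesis by linarith
qed

lemma Qt_cubic_lower_bound_nonpos:
  fixes lam s :: real
  assumes "lam > -1/2" "lam \<le> 0" "s \<ge> 4 + 2*lam"
  shows "12 * (2*lam + 3) * ((s - lam - 1) * (s - 1/2) * (s - lam/3 - 7/2)) \<le> Qt_cubic lam s"
proof -
  define u t where "u = s - (4 + 2*lam)" and "t = lam + 1/2"
  have "Qt_cubic lam s - 12 * (2*lam + 3) * ((s - lam - 1) * (s - 1/2) * (s - lam/3 - 7/2))
      = 50 + 20*u + 220*t + 160*t*u + 32*t*u^2 + 210*t^2 + t^2*u*(84 - 8*t) + t^3*(32 - 8*t)"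
      (is "_ = ?c")
    unfolding u_def t_def Qt_cubic_def by algebra
  moreover have "0 \<le> ?c"
    using assms
    by (intro add_nonneg_nonneg mult_nonneg_nonneg zero_le_power) (simp_all add: u_def t_def)
  ultimately show ?thesis by linarith
qed

lemma Qt_cubic_lower_bound_nonneg:
  fixes lam s :: real
  assumes "lam \<ge> 0" "s \<ge> 4 + 2*lam"
  shows "12 * (2*lam + 3) * ((s - lam - 1) * (s - 1/2) * (s - lam/2 - 7/2)) \<le> Qt_cubic lam s"
proof -
  define u where "u = s - (4 + 2*lam)"
  have "Qt_cubic lam s - 12 * (2*lam + 3) * ((s - lam - 1) * (s - 1/2) * (s - lam/2 - 7/2))
      = 216 + 120*u + 16*u^2 + 513*lam + 277*lam*u + 38*lam*u^2 + 345*lam^2 + 116*lam^2*u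
        + 4*lam^2*u^2 + 66*lam^3 + 4*lam^3*u" (is "_ = ?c")
    unfolding u_def Qt_cubic_def by algebra
  moreover have "0 \<le> ?c"
    using assms
    by (intro add_nonneg_nonneg mult_nonneg_nonneg zero_le_power) (simp_all add: u_def)
  ultimately show ?thesis by linarith
qed

theorem lemma3p6:
  fixes lam :: real and m :: nat
  assumes "lam > - 1/2" and "m \<ge> 2"
  shows "(lam \<le> 0 \<longrightarrow>
            At lam 2 m \<ge> (real m - 1) * real m * (real m + lam) * (real m + lam + 1)
              * ((real m)^2 + lam * real m - 1/2) * ((real m)^2 + lam * real m - lam/3 - 7/2)
              / (2 * (2*lam + 1) * (2*lam + 5)))
       \<and> (lam \<ge> 0 \<longrightarrow>
            At lam 2 m \<ge> (real m - 1) * real m * (real m + lam) * (real m + lam + 1)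
              * ((real m)^2 + lam * real m - 1/2) * ((real m)^2 + lam * real m - lam/2 - 7/2)
              / (2 * (2*lam + 1) * (2*lam + 5)))
       \<and> At lam 2 m \<le> (real m - 1) * (real m)^2 * (real m + lam)^2 * (real m + lam + 1)
              * ((real m)^2 + lam * real m - 1/2)
              / (2 * (2*lam + 1) * (2*lam + 5))"
proof -
  define s where "s = real m * (real m + lam)"
  have "s - (4 + 2*lam) = (real m - 2) * (real m + 2 + lam)"
    by (simp add: s_def algebra_simps)
  also have "\<dots> \<ge> 0" using assms by simp
  finally have s_ge: "s \<ge> 4 + 2*lam" by simp
  then have s_pos: "s > 0" using assms(1) by linarith
  have At: "At lam 2 m = Qt_coeff2 lam s"
    by (simp add: At_def coeff_Qt[OF assms(1)] s_def)
  have lower_form: "(real m - 1) * real m * (real m + lam) * (real m + lam + 1)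
      * ((real m)^2 + lam * real m - 1/2) * ((real m)^2 + lam * real m - c - 7/2)
      = s * ((s - lam - 1) * (s - 1/2) * (s - c - 7/2))" for c
    unfolding s_def by algebra
  have upper_form: "(real m - 1) * (real m)^2 * (real m + lam)^2 * (real m + lam + 1)
      * ((real m)^2 + lam * real m - 1/2) = s * (s * (s - lam - 1) * (s - 1/2))"
    unfolding s_def by algebra
  show ?thesis
    unfolding At lower_form upper_form
      Qt_coeff2_ge_iff[OF assms(1) s_pos] Qt_coeff2_le_iff[OF assms(1) s_pos]
    using Qt_cubic_lower_bound_nonpos[OF assms(1) _ s_ge] Qt_cubic_lower_bound_nonneg[OF _ s_ge]
      Qt_cubic_upper_bound[OF assms(1) s_ge]
    by simp
qed
end
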